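(* Let $M$ be a closed manifold immersed in the standard symplectic space $(V,\omega)=(\mathbb{R}^{2d},\sum_{i=1}^d dx_i\wedge dy_i)$. Then for every odd integer $n\ge 3$ there exists a non-degenerate $n$-periodic orbit of the outer symplectic billiard correspondence with respect to $M$.
   Context: Write points of $V=\mathbb{R}^{2d}$ as $z=(x,y)$ with $x,y\in\mathbb{R}^d$, so $\omega((x,y),(x',y'))=x\cdot y'-y\cdot x'$. Points of $M$ are identified with their images in $V$, and for a point $Q$ of $M$, $T_QM\subset V$ denotes the (image of the) tangent space at that point; $T_Q^\omega M=\{\xi\in V:\omega(\xi,\zeta)=0\ \forall\zeta\in T_QM\}$. Two points $z,z'\in V$ are in outer symplectic billiard correspondence with respect to $M$ if $Q=\tfrac12(z+z')$ is a point of $M$ and $z'-z\in T^\omega_QM$. An $n$-periodic orbit is an $n$-tuple $(z_1,\dots,z_n)$ of points of $V$ such that $z_i$ and $z_{i+1}$ are in outer symplectic billiard correspondence for every $i=1,\dots,n$, indices read cyclically ($z_{n+1}=z_1$). It is degenerate if $z_{i-1}=z_{i+1}$ for some $i$ (cyclic indices), and non-degenerate otherwise. *)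

theory Defs
  imports "HOL-Analysis.Analysis"
begin

text \<open>Smooth (C-infinity) maps on an open set: there is a family of iterated directional
  derivatives D vs x = D^k g(x)[vs], each Frechet differentiable in x with the next one as derivative.\<close>
definition smooth_on :: "('a::real_normed_vector \<Rightarrow> 'b::real_normed_vector) \<Rightarrow> 'a set \<Rightarrow> bool" where
  "smooth_on g U \<longleftrightarrow> open U \<and>
     (\<exists>D :: 'a list \<Rightarrow> 'a \<Rightarrow> 'b. D [] = g \<and>
        (\<forall>vs. \<forall>x\<in>U. (D vs has_derivative (\<lambda>v. D (v # vs) x)) (at x)))"

definition injective_derivative_on :: "('a::real_normed_vector \<Rightarrow> 'b::real_normed_vector) \<Rightarrow> 'a set \<Rightarrow> bool" where
  "injective_derivative_on g U \<longleftrightarrow> (\<forall>u\<in>U. \<exists>g'. (g has_derivative g') (at u) \<and> inj g')"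

definition local_param :: "('k::euclidean_space \<Rightarrow> 'n::euclidean_space) \<Rightarrow> 'k set \<Rightarrow> 'n set \<Rightarrow> bool" where
  "local_param \<phi> U N \<longleftrightarrow> smooth_on \<phi> U \<and> injective_derivative_on \<phi> U \<and>
     openin (top_of_set N) (\<phi> ` U) \<and> (\<exists>\<psi>. homeomorphism U (\<phi> ` U) \<phi> \<psi>)"

text \<open>A closed (compact, boundaryless, nonempty) smooth manifold of dimension DIM('k),
  realised (Whitney) as a compact smooth submanifold N of a Euclidean space 'n.\<close>
definition closed_manifold :: "'k::euclidean_space itself \<Rightarrow> 'n::euclidean_space set \<Rightarrow> bool" where
  "closed_manifold (_ :: 'k itself) N \<longleftrightarrow> compact N \<and> N \<noteq> {} \<and>
     (\<forall>p\<in>N. \<exists>(\<phi> :: 'k \<Rightarrow> 'n) U. local_param \<phi> U N \<and> p \<in> \<phi> ` U)"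

definition immersion :: "'k::euclidean_space itself \<Rightarrow> ('n::euclidean_space \<Rightarrow> 'v::euclidean_space) \<Rightarrow> 'n set \<Rightarrow> bool" where
  "immersion (_ :: 'k itself) f N \<longleftrightarrow>
     (\<forall>p\<in>N. \<exists>(\<phi> :: 'k \<Rightarrow> 'n) U. local_param \<phi> U N \<and> p \<in> \<phi> ` U \<and>
        smooth_on (f \<circ> \<phi>) U \<and> injective_derivative_on (f \<circ> \<phi>) U)"

text \<open>Image in V of the tangent space of the manifold at the point q of N (i.e. T_Q M for the
  point Q = f q of M): the range of the derivative of f composed with a local parametrization.\<close>
definition tangent_image :: "'k::euclidean_space itself \<Rightarrow> ('n::euclidean_space \<Rightarrow> 'v::euclidean_space) \<Rightarrow> 'n set \<Rightarrow> 'n \<Rightarrow> 'v set" where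
  "tangent_image (_ :: 'k itself) f N q =
     {w. \<exists>(\<phi> :: 'k \<Rightarrow> 'n) U u g'. local_param \<phi> U N \<and> u \<in> U \<and> \<phi> u = q \<and>
          ((f \<circ> \<phi>) has_derivative g') (at u) \<and> w \<in> range g'}"

definition omega :: "((real^'d) \<times> (real^'d)) \<Rightarrow> ((real^'d) \<times> (real^'d)) \<Rightarrow> real" where
  "omega z z' = fst z \<bullet> snd z' - snd z \<bullet> fst z'"

definition symp_complement :: "((real^'d) \<times> (real^'d)) set \<Rightarrow> ((real^'d) \<times> (real^'d)) set" where
  "symp_complement T = {\<xi>. \<forall>\<zeta>\<in>T. omega \<xi> \<zeta> = 0}"

definition osb_corr :: "'k::euclidean_space itself \<Rightarrow> ('n::euclidean_space \<Rightarrow> (real^'d) \<times> (real^'d)) \<Rightarrow> 'n set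
    \<Rightarrow> (real^'d) \<times> (real^'d) \<Rightarrow> (real^'d) \<times> (real^'d) \<Rightarrow> bool" where
  "osb_corr K f N z z' \<longleftrightarrow>
     (\<exists>q\<in>N. f q = (1/2) *\<^sub>R (z + z') \<and> z' - z \<in> symp_complement (tangent_image K f N q))"

definition periodic_orbit :: "'k::euclidean_space itself \<Rightarrow> ('n::euclidean_space \<Rightarrow> (real^'d) \<times> (real^'d)) \<Rightarrow> 'n set
    \<Rightarrow> nat \<Rightarrow> (nat \<Rightarrow> (real^'d) \<times> (real^'d)) \<Rightarrow> bool" where
  "periodic_orbit K f N n z \<longleftrightarrow> (\<forall>i<n. osb_corr K f N (z i) (z (Suc i mod n)))"

definition nondegenerate_orbit :: "nat \<Rightarrow> (nat \<Rightarrow> 'a) \<Rightarrow> bool" where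
  "nondegenerate_orbit n z \<longleftrightarrow> (\<forall>i<n. z ((i + n - 1) mod n) \<noteq> z (Suc i mod n))"

end

theory Submission
  imports Defs
begin

text \<open>Periodic orbits are critical points of the generating function
  F(P) = \<Sum> (-1)^(j-i) \<omega>(P_i, P_j), summed over 0 \<le> i < j < n, on n-tuples of points of M,
  the midpoints of the orbit.
  Since M is compact, F attains its maximum at some P. Let V_i be the \<omega>-gradient of F in the
  i-th slot. For odd n one has V_i + V_(i+1) = P_i - P_(i+1) cyclically, so z_i = P_i + V_i
  satisfies (z_i + z_(i+1))/2 = P_i and z_(i+1) - z_i = -2 V_i, which is \<omega>-orthogonal to the
  tangent space of M at P_i because P is critical.

  This orbit is degenerate exactly when P_(i-1) = P_i for some i. If a maximizer has
  P_k = P_(k+1), replacing this pair by (u, v) and by (v, u) changes F by opposite amounts, so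
  both are again maximizers; as M is infinite, u and v can be chosen distinct from each other and
  from the neighbouring points, which removes the repetition. Hence a maximizer with the fewest
  repetitions gives a non-degenerate orbit.\<close>

lemma bilinear_omega: "bilinear omega"
  by (simp add: bilinear_def linear_iff omega_def algebra_simps)

interpretation omega: bounded_bilinear omega
  using bilinear_omega bilinear_conv_bounded_bilinear by blast

lemma omega_antisym: "omega a b = - omega b a"
  by (simp add: omega_def inner_commute)

lemma symp_complement_scaleR: "\<xi> \<in> symp_complement T \<Longrightarrow> c *\<^sub>R \<xi> \<in> symp_complement T"
  by (simp add: symp_complement_def omega.scaleR_left)

section \<open>The generating function\<close>

definition osb_coeff :: "nat \<Rightarrow> nat \<Rightarrow> real" where
  "osb_coeff i j = (if i < j then (-1) ^ (j - i) else 0)"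

definition osb_action :: "nat \<Rightarrow> (nat \<Rightarrow> (real^'d) \<times> (real^'d)) \<Rightarrow> real" where
  "osb_action n P = (\<Sum>i<n. \<Sum>j<n. osb_coeff i j * omega (P i) (P j))"

definition osb_gradient :: "nat \<Rightarrow> (nat \<Rightarrow> (real^'d) \<times> (real^'d)) \<Rightarrow> nat \<Rightarrow> (real^'d) \<times> (real^'d)" where
  "osb_gradient n P k = (\<Sum>j<n. (osb_coeff k j - osb_coeff j k) *\<^sub>R P j)"

lemma osb_coeff_self [simp]: "osb_coeff i i = 0"
  by (simp add: osb_coeff_def)

lemma osb_coeff_consecutive:
  assumes "Suc k < n" "j < n"
  shows "osb_coeff k j - osb_coeff j k + osb_coeff (Suc k) j - osb_coeff j (Suc k)
       = (if j = k then 1 else if j = Suc k then -1 else 0)"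
  using assms unfolding osb_coeff_def minus_one_power_iff
  by (auto split: if_splits; presburger)

text \<open>The wrap-around from n - 1 to 0 is where the oddness of n enters.\<close>

lemma osb_coeff_wrap:
  assumes "odd n" "1 < n" "Suc k = n" "j < n"
  shows "osb_coeff k j - osb_coeff j k + osb_coeff 0 j - osb_coeff j 0
       = (if j = k then 1 else if j = 0 then -1 else 0)"
  using assms unfolding osb_coeff_def minus_one_power_iff
  by (auto split: if_splits; presburger)

lemma osb_action_split:
  assumes "k < n"
  shows "osb_action n P = (\<Sum>i\<in>{..<n}-{k}. \<Sum>j\<in>{..<n}-{k}. osb_coeff i j * omega (P i) (P j))
           + omega (P k) (osb_gradient n P k)"
proof -
  let ?g = "\<lambda>i j. osb_coeff i j * omega (P i) (P j)"
  let ?R = "{..<n} - {k}"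
  have fin: "finite {..<n}" by simp
  have "osb_action n P = (\<Sum>j<n. ?g k j) + (\<Sum>i\<in>?R. \<Sum>j<n. ?g i j)"
    unfolding osb_action_def using assms by (simp add: sum.remove[OF fin, of k])
  also have "(\<Sum>i\<in>?R. \<Sum>j<n. ?g i j) = (\<Sum>i\<in>?R. ?g i k) + (\<Sum>i\<in>?R. \<Sum>j\<in>?R. ?g i j)"
    using assms by (simp add: sum.remove[OF fin, of k] sum.distrib)
  also have "(\<Sum>i\<in>?R. ?g i k) = (\<Sum>i<n. ?g i k)"
    using assms by (simp add: sum.remove[OF fin, of k])
  also have "(\<Sum>j<n. ?g k j) + ((\<Sum>i<n. ?g i k) + (\<Sum>i\<in>?R. \<Sum>j\<in>?R. ?g i j))
      = (\<Sum>i\<in>?R. \<Sum>j\<in>?R. ?g i j) + (\<Sum>j<n. ?g k j + ?g j k)"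
    by (simp add: sum.distrib)
  also have "(\<Sum>j<n. ?g k j + ?g j k) = omega (P k) (osb_gradient n P k)"
    unfolding osb_gradient_def omega.sum_right omega.scaleR_right
    by (intro sum.cong refl) (simp add: omega_antisym[of "P j" "P k" for j] algebra_simps)
  finally show ?thesis .
qed

lemma osb_gradient_upd_same: "osb_gradient n (P(k := x)) k = osb_gradient n P k"
  unfolding osb_gradient_def by (intro sum.cong) auto

lemma osb_action_upd:
  assumes "k < n"
  shows "osb_action n (P(k := x)) = osb_action n P + omega (x - P k) (osb_gradient n P k)"
proof -
  have "(\<Sum>i\<in>{..<n}-{k}. \<Sum>j\<in>{..<n}-{k}. osb_coeff i j * omega ((P(k := x)) i) ((P(k := x)) j))
      = (\<Sum>i\<in>{..<n}-{k}. \<Sum>j\<in>{..<n}-{k}. osb_coeff i j * omega (P i) (P j))"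
    by (intro sum.cong) auto
  then show ?thesis
    using osb_action_split[OF assms, of "P(k := x)"] osb_action_split[OF assms, of P]
    by (simp add: osb_gradient_upd_same omega.diff_left)
qed

lemma osb_gradient_upd:
  assumes "k < n" "m \<noteq> k"
  shows "osb_gradient n (P(k := x)) m
       = osb_gradient n P m + (osb_coeff m k - osb_coeff k m) *\<^sub>R (x - P k)"
proof -
  have fin: "finite {..<n}" by simp
  show ?thesis
    unfolding osb_gradient_def using assms
    by (simp add: sum.remove[OF fin, of k] algebra_simps)
qed

lemma sum_delta_pair:
  fixes P :: "nat \<Rightarrow> 'a::real_vector"
  assumes "k < n" "k' < n" "k \<noteq> k'"
  shows "(\<Sum>j<n. (if j = k then 1 else if j = k' then -1 else 0) *\<^sub>R P j) = P k - P k'"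
proof -
  have "(\<Sum>j<n. (if j = k then 1 else if j = k' then -1 else 0) *\<^sub>R P j)
      = (\<Sum>j<n. (if j = k then P j else 0) - (if j = k' then P j else 0))"
    using assms by (intro sum.cong) auto
  then show ?thesis using assms by (simp add: sum_subtractf)
qed

lemma osb_gradient_consecutive:
  assumes "odd n" "k < n"
  shows "osb_gradient n P k + osb_gradient n P (Suc k mod n) = P k - P (Suc k mod n)"
proof -
  consider "Suc k < n" | "n = 1" | "1 < n" "Suc k = n"
    using assms by fastforce
  then show ?thesis
  proof cases
    case 1
    have "osb_gradient n P k + osb_gradient n P (Suc k mod n) = (\<Sum>j<n.
        (osb_coeff k j - osb_coeff j k + osb_coeff (Suc k) j - osb_coeff j (Suc k)) *\<^sub>R P j)"
      using 1 unfolding osb_gradient_def by (simp add: sum.distrib[symmetric] algebra_simps)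
    also have "\<dots> = (\<Sum>j<n. (if j = k then 1 else if j = Suc k then -1 else 0) *\<^sub>R P j)"
      using 1 by (intro sum.cong) (simp_all add: osb_coeff_consecutive)
    also have "\<dots> = P k - P (Suc k mod n)"
      using 1 by (simp add: sum_delta_pair)
    finally show ?thesis .
  next
    case 2
    then show ?thesis using assms by (simp add: osb_gradient_def)
  next
    case 3
    have "osb_gradient n P k + osb_gradient n P (Suc k mod n) = (\<Sum>j<n.
        (osb_coeff k j - osb_coeff j k + osb_coeff 0 j - osb_coeff j 0) *\<^sub>R P j)"
      using 3 unfolding osb_gradient_def by (simp add: sum.distrib[symmetric] algebra_simps)
    also have "\<dots> = (\<Sum>j<n. (if j = k then 1 else if j = 0 then -1 else 0) *\<^sub>R P j)"
      using 3 assms by (intro sum.cong) (simp_all add: osb_coeff_wrap)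
    also have "\<dots> = P k - P (Suc k mod n)"
      using 3 by (simp add: sum_delta_pair)
    finally show ?thesis .
  qed
qed

lemma osb_gradient_upd_next:
  assumes "odd n" "1 < n" "k < n"
  shows "osb_gradient n (P(k := x)) (Suc k mod n) = osb_gradient n P (Suc k mod n) + (x - P k)"
proof -
  have "osb_coeff (Suc k mod n) k - osb_coeff k (Suc k mod n) = 1"
    using assms by (auto simp: mod_Suc osb_coeff_def minus_one_power_iff)
  moreover have "Suc k mod n \<noteq> k"
    using assms by (auto simp: mod_Suc)
  ultimately show ?thesis
    using osb_gradient_upd[OF assms(3) \<open>Suc k mod n \<noteq> k\<close>, of P x] by simp
qed

lemma continuous_on_osb_action: "continuous_on S (osb_action n)"
  unfolding osb_action_def
  by (intro continuous_intros omega.continuous_on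
      continuous_on_product_then_coordinatewise[OF continuous_on_id])

lemma osb_action_cong: "(\<And>i. i < n \<Longrightarrow> P i = Q i) \<Longrightarrow> osb_action n P = osb_action n Q"
  unfolding osb_action_def by (intro sum.cong) auto

text \<open>With P_k = P_(k+1) the only term coupling the two slots is \<omega>(v - P_k, u - P_k),
  which is antisymmetric in (u, v).\<close>

lemma osb_action_swap:
  assumes "odd n" "1 < n" "k < n" "P (Suc k mod n) = P k"
  shows "osb_action n (P(k := u, Suc k mod n := v)) + osb_action n (P(k := v, Suc k mod n := u))
       = 2 * osb_action n P"
proof -
  define k1 where "k1 = Suc k mod n"
  define V where "V = osb_gradient n P k"
  have k1: "k1 < n" "k1 \<noteq> k" using assms by (auto simp: k1_def mod_Suc)
  have V1: "osb_gradient n P k1 = - V"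
    using osb_gradient_consecutive[OF assms(1,3), of P] assms(4)
    by (simp add: V_def k1_def eq_neg_iff_add_eq_0 add.commute)
  have G: "osb_action n (P(k := u, k1 := v)) = osb_action n P
      + omega (u - P k) V + omega (v - P k) (u - P k) - omega (v - P k) V" for u v
  proof -
    have "osb_action n (P(k := u, k1 := v))
        = osb_action n (P(k := u)) + omega (v - P k) (osb_gradient n (P(k := u)) k1)"
      using osb_action_upd[OF k1(1), of "P(k := u)" v] k1(2) assms(4) by (simp add: k1_def)
    also have "osb_gradient n (P(k := u)) k1 = u - P k - V"
      using osb_gradient_upd_next[OF assms(1-3), of P u] V1 by (simp add: k1_def)
    also have "osb_action n (P(k := u)) = osb_action n P + omega (u - P k) V"
      using osb_action_upd[OF assms(3)] by (simp add: V_def)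
    finally show ?thesis unfolding omega.diff_right by linarith
  qed
  show ?thesis
    using G[of u v] G[of v u] omega_antisym[of "v - P k" "u - P k"] by (simp add: k1_def)
qed

section \<open>Maximizers without repetitions\<close>

lemma Suc_mod_neq_self: "1 < n \<Longrightarrow> m < n \<Longrightarrow> Suc m mod n \<noteq> m"
  by (auto simp: mod_Suc)

lemma Suc_Suc_mod_neq_self: "2 < n \<Longrightarrow> m < n \<Longrightarrow> Suc (Suc m mod n) mod n \<noteq> m"
  by (auto simp: mod_Suc)

lemma Suc_mod_inj: "j < n \<Longrightarrow> k < n \<Longrightarrow> Suc j mod n = Suc k mod n \<Longrightarrow> j = k"
  by (auto simp: mod_Suc split: if_splits)

lemma Suc_pred_mod: "i < n \<Longrightarrow> Suc ((i + n - 1) mod n) mod n = i"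
  by (cases i) (auto simp: mod_Suc)

definition cyclic_repetitions :: "nat \<Rightarrow> (nat \<Rightarrow> 'a) \<Rightarrow> nat set" where
  "cyclic_repetitions n P = {k. k < n \<and> P k = P (Suc k mod n)}"

lemma cyclic_repetitions_upd_psubset:
  assumes "2 < n" "k \<in> cyclic_repetitions n P"
    and "x \<noteq> P ((k + n - 1) mod n)" "y \<noteq> x" "y \<noteq> P (Suc (Suc k mod n) mod n)"
  shows "cyclic_repetitions n (P(k := x, Suc k mod n := y)) \<subset> cyclic_repetitions n P"
proof -
  define k1 where "k1 = Suc k mod n"
  define km where "km = (k + n - 1) mod n"
  define k2 where "k2 = Suc k1 mod n"
  define P' where "P' = P(k := x, k1 := y)"
  have k: "k < n" using assms(2) by (simp add: cyclic_repetitions_def)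
  have km: "km < n" "Suc km mod n = k"
    using k Suc_pred_mod[OF k] by (simp_all add: km_def)
  have k1: "k1 < n" using k by (simp add: k1_def)
  have "1 < n" using assms(1) by simp
  have neq: "k1 \<noteq> k" "km \<noteq> k" "km \<noteq> k1" "k2 \<noteq> k" "k2 \<noteq> k1"
    using Suc_mod_neq_self[OF \<open>1 < n\<close> k] Suc_mod_neq_self[OF \<open>1 < n\<close> km(1)]
      Suc_Suc_mod_neq_self[OF assms(1) km(1)] Suc_Suc_mod_neq_self[OF assms(1) k]
      Suc_mod_neq_self[OF \<open>1 < n\<close> k1]
    unfolding k1_def k2_def km(2) by auto
  have "j \<in> cyclic_repetitions n P - {k}" if "j \<in> cyclic_repetitions n P'" for j
  proof -
    have j: "j < n" "P' j = P' (Suc j mod n)" using that by (auto simp: cyclic_repetitions_def)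
    have "j \<noteq> km" using j neq km(2) assms(3) by (auto simp: P'_def km_def)
    moreover have "j \<noteq> k" using j neq assms(4) by (auto simp: P'_def k1_def)
    moreover have "j \<noteq> k1" using j neq assms(5) by (auto simp: P'_def k1_def k2_def)
    moreover have "Suc j mod n \<noteq> k" "Suc j mod n \<noteq> k1"
      using Suc_mod_inj[OF j(1)] k km calculation by (auto simp: k1_def)
    ultimately show ?thesis using j by (simp add: P'_def cyclic_repetitions_def)
  qed
  then show ?thesis
    using assms(2) by (auto simp: P'_def k1_def)
qed

definition osb_maximizer :: "nat \<Rightarrow> ((real^'d) \<times> (real^'d)) set \<Rightarrow> (nat \<Rightarrow> (real^'d) \<times> (real^'d)) \<Rightarrow> bool" where
  "osb_maximizer n K P \<longleftrightarrow>
     (\<forall>i<n. P i \<in> K) \<and> (\<forall>Q. (\<forall>i<n. Q i \<in> K) \<longrightarrow> osb_action n Q \<le> osb_action n P)"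

lemma osb_maximizer_exists:
  assumes "compact K" "K \<noteq> {}"
  shows "\<exists>P. osb_maximizer n K P"
proof -
  \<comment> \<open>Entries from n on are pinned to 0, so that the constraint set is compact in the
    product topology on configurations.\<close>
  define C where "C = PiE UNIV (\<lambda>i. if i < n then K else {0})"
  have "compactin (product_topology (\<lambda>_. euclidean) UNIV) C"
    unfolding C_def using assms(1) by (subst compactin_PiE) auto
  then have "compact C"
    by (simp add: euclidean_product_topology)
  moreover obtain a where "a \<in> K" using assms(2) by blast
  then have "(\<lambda>i. if i < n then a else 0) \<in> C" by (simp add: C_def PiE_iff)
  then have "C \<noteq> {}" by blast
  ultimately obtain P where P: "P \<in> C" "\<And>Q. Q \<in> C \<Longrightarrow> osb_action n Q \<le> osb_action n P"
    using continuous_attains_sup[OF _ _ continuous_on_osb_action] by metis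
  have "osb_action n Q \<le> osb_action n P" if "\<forall>i<n. Q i \<in> K" for Q
  proof -
    have "(\<lambda>i. if i < n then Q i else 0) \<in> C" using that by (simp add: C_def PiE_iff)
    then show ?thesis using P(2) osb_action_cong[of n Q "\<lambda>i. if i < n then Q i else 0"] by simp
  qed
  moreover have "\<forall>i<n. P i \<in> K" using P(1) by (simp add: C_def PiE_iff) metis
  ultimately show ?thesis unfolding osb_maximizer_def by blast
qed

lemma osb_maximizer_swap:
  assumes "osb_maximizer n K P" "odd n" "1 < n" "k < n" "P (Suc k mod n) = P k" "u \<in> K" "v \<in> K"
  shows "osb_maximizer n K (P(k := u, Suc k mod n := v))"
proof -
  have "Suc k mod n < n" using assms(3) by simp
  then have in_K: "\<forall>i<n. (P(k := u, Suc k mod n := v)) i \<in> K"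
      "\<forall>i<n. (P(k := v, Suc k mod n := u)) i \<in> K"
    using assms(1,6,7) by (auto simp: osb_maximizer_def)
  then have "osb_action n (P(k := u, Suc k mod n := v)) \<le> osb_action n P"
      "osb_action n (P(k := v, Suc k mod n := u)) \<le> osb_action n P"
    using assms(1) by (auto simp: osb_maximizer_def)
  then have "osb_action n (P(k := u, Suc k mod n := v)) = osb_action n P"
    using osb_action_swap[OF assms(2-5), of u v] by linarith
  then show ?thesis
    using assms(1) in_K(1)
    unfolding osb_maximizer_def by auto
qed

lemma osb_maximizer_nonrepeating_exists:
  assumes "compact K" "infinite K" "odd n" "2 < n"
  shows "\<exists>P. osb_maximizer n K P \<and> cyclic_repetitions n P = {}"
proof -
  have avoid: "\<exists>x\<in>K. x \<noteq> a \<and> x \<noteq> b" for a b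
  proof -
    have "infinite (K - {a, b})" using assms(2) by simp
    then show ?thesis using infinite_imp_nonempty by blast
  qed
  have "K \<noteq> {}" using assms(2) by auto
  then obtain P0 where "osb_maximizer n K P0"
    using osb_maximizer_exists[OF assms(1)] by blast
  then obtain P where P: "osb_maximizer n K P"
    and P_min: "\<And>Q. osb_maximizer n K Q \<Longrightarrow> card (cyclic_repetitions n P) \<le> card (cyclic_repetitions n Q)"
    using ex_has_least_nat[of "osb_maximizer n K" P0 "\<lambda>P. card (cyclic_repetitions n P)"] by blast
  have "cyclic_repetitions n P = {}"
  proof (rule ccontr)
    assume "cyclic_repetitions n P \<noteq> {}"
    then obtain k where k: "k \<in> cyclic_repetitions n P" by blast
    then have k': "k < n" "P (Suc k mod n) = P k" by (simp_all add: cyclic_repetitions_def)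
    obtain x where x: "x \<in> K" "x \<noteq> P ((k + n - 1) mod n)" using avoid by blast
    obtain y where y: "y \<in> K" "y \<noteq> x" "y \<noteq> P (Suc (Suc k mod n) mod n)" using avoid by blast
    have "1 < n" using assms(4) by simp
    have "card (cyclic_repetitions n P) \<le> card (cyclic_repetitions n (P(k := x, Suc k mod n := y)))"
      using P_min osb_maximizer_swap[OF P assms(3) \<open>1 < n\<close> k' x(1) y(1)] by blast
    moreover have "finite (cyclic_repetitions n P)"
      by (simp add: cyclic_repetitions_def)
    then have "card (cyclic_repetitions n (P(k := x, Suc k mod n := y))) < card (cyclic_repetitions n P)"
      using cyclic_repetitions_upd_psubset[OF assms(4) k x(2) y(2,3)] by (rule psubset_card_mono)
    ultimately show False by simp
  qed
  then show ?thesis using P by blast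
qed

section \<open>Immersed closed manifolds\<close>

lemma smooth_on_imp_continuous_on: "smooth_on g U \<Longrightarrow> continuous_on U g"
  unfolding smooth_on_def
  by (metis continuous_at_imp_continuous_on has_derivative_continuous)

lemma local_param_open: "local_param \<phi> U N \<Longrightarrow> open U"
  by (simp add: local_param_def smooth_on_def)

lemma local_param_image_subset: "local_param \<phi> U N \<Longrightarrow> \<phi> ` U \<subseteq> N"
  unfolding local_param_def by (meson openin_imp_subset)

lemma immersion_continuous_on:
  assumes "immersion TYPE('k::euclidean_space) f N"
  shows "continuous_on N f"
proof -
  have "continuous (at p within N) f" if "p \<in> N" for p
  proof -
    obtain \<phi> :: "'k \<Rightarrow> 'a" and U where chart: "local_param \<phi> U N" and p: "p \<in> \<phi> ` U"
      and smooth: "smooth_on (f \<circ> \<phi>) U"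
      using assms \<open>p \<in> N\<close> unfolding immersion_def by blast
    obtain \<psi> where hom: "homeomorphism U (\<phi> ` U) \<phi> \<psi>" and "openin (top_of_set N) (\<phi> ` U)"
      using chart unfolding local_param_def by blast
    then obtain T where T: "open T" "\<phi> ` U = N \<inter> T" unfolding openin_open by blast
    have "continuous_on (\<phi> ` U) (\<lambda>y. (f \<circ> \<phi>) (\<psi> y))"
      using hom by (intro continuous_on_compose2[OF smooth_on_imp_continuous_on[OF smooth]])
        (auto simp: homeomorphism_def)
    moreover have "\<And>y. y \<in> \<phi> ` U \<Longrightarrow> (f \<circ> \<phi>) (\<psi> y) = f y"
      using hom by (auto simp: homeomorphism_def)
    ultimately have "continuous_on (\<phi> ` U) f" by (rule continuous_on_eq)
    moreover have "at p within N = at p within \<phi> ` U"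
      using T p by (intro at_within_nhd[of p T]) auto
    ultimately show ?thesis
      using p continuous_on_eq_continuous_within by metis
  qed
  then show ?thesis using continuous_on_eq_continuous_within by blast
qed

lemma immersion_image_infinite:
  assumes "immersion TYPE('k::euclidean_space) f N" "N \<noteq> {}"
  shows "infinite (f ` N)"
proof
  assume fin: "finite (f ` N)"
  obtain p where "p \<in> N" using assms(2) by blast
  then obtain \<phi> :: "'k \<Rightarrow> 'a" and U where chart: "local_param \<phi> U N" and p: "p \<in> \<phi> ` U"
      and smooth: "smooth_on (f \<circ> \<phi>) U" and inj: "injective_derivative_on (f \<circ> \<phi>) U"
    using assms(1) unfolding immersion_def by blast
  obtain u where u: "u \<in> U" using p by blast
  obtain g' where der: "((f \<circ> \<phi>) has_derivative g') (at u)" and "inj g'"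
    using inj u unfolding injective_derivative_on_def by blast
  obtain r where r: "r > 0" "ball u r \<subseteq> U"
    using smooth u unfolding smooth_on_def by (meson openE)
  let ?S = "(f \<circ> \<phi>) ` ball u r"
  have "connected ?S"
    using smooth_on_imp_continuous_on[OF smooth] r
    by (intro connected_continuous_image) (auto intro: continuous_on_subset)
  moreover have "?S \<subseteq> f ` N"
    using r local_param_image_subset[OF chart] by auto
  then have "finite ?S" using fin by (rule finite_subset)
  moreover have "?S \<noteq> {}" using r by simp
  ultimately obtain c where "?S = {c}" using connected_finite_iff_sing by blast
  then have "((\<lambda>_. c) has_derivative g') (at u)"
    using r by (intro has_derivative_transform_within_open[OF der open_ball[of u r]]) auto
  then have "g' = (\<lambda>_. 0)"
    using has_derivative_const has_derivative_unique by blast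
  moreover obtain e :: 'k where "e \<in> Basis" using nonempty_Basis by blast
  ultimately have "g' e = g' 0" by simp
  then show False
    using \<open>inj g'\<close> \<open>e \<in> Basis\<close> by (simp add: inj_eq nonzero_Basis)
qed

section \<open>From maximizers to orbits\<close>

lemma osb_maximizer_gradient_symp_orthogonal:
  fixes f :: "'n::euclidean_space \<Rightarrow> (real^'d) \<times> (real^'d)"
  assumes "osb_maximizer n (f ` N) P" "i < n" "q \<in> N" "f q = P i"
  shows "osb_gradient n P i \<in> symp_complement (tangent_image TYPE('k::euclidean_space) f N q)"
  unfolding symp_complement_def
proof (intro CollectI ballI)
  fix w assume "w \<in> tangent_image TYPE('k) f N q"
  then obtain \<phi> :: "'k \<Rightarrow> 'n" and U u g' where chart: "local_param \<phi> U N" and u: "u \<in> U" "\<phi> u = q"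
    and der: "((f \<circ> \<phi>) has_derivative g') (at u)" and w: "w \<in> range g'"
    unfolding tangent_image_def by blast
  define V where "V = osb_gradient n P i"
  have "open U" "\<phi> ` U \<subseteq> N"
    using local_param_open[OF chart] local_param_image_subset[OF chart] .
  have "omega ((f \<circ> \<phi>) y) V \<le> omega ((f \<circ> \<phi>) u) V" if "y \<in> U" for y
  proof -
    have "osb_action n (P(i := f (\<phi> y))) \<le> osb_action n P"
      using assms(1) \<open>\<phi> ` U \<subseteq> N\<close> that unfolding osb_maximizer_def by auto
    then show ?thesis
      using osb_action_upd[OF assms(2), of P "f (\<phi> y)"] u assms(4)
      by (simp add: V_def omega.diff_left)
  qed
  moreover have "((\<lambda>y. omega ((f \<circ> \<phi>) y) V) has_derivative (\<lambda>v. omega (g' v) V)) (at u)"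
    using bounded_linear.has_derivative[OF omega.bounded_linear_left der] .
  ultimately have "(\<lambda>v. omega (g' v) V) = (\<lambda>v. 0)"
    using differential_zero_maxmin[OF u(1) \<open>open U\<close>] by blast
  then have "omega w V = 0" using w by (metis image_iff)
  then show "omega V w = 0" using omega_antisym[of V w] by simp
qed

definition osb_orbit_of :: "nat \<Rightarrow> (nat \<Rightarrow> (real^'d) \<times> (real^'d)) \<Rightarrow> nat \<Rightarrow> (real^'d) \<times> (real^'d)" where
  "osb_orbit_of n P i = P i + osb_gradient n P i"

lemma osb_orbit_of_add_next:
  assumes "odd n" "k < n"
  shows "osb_orbit_of n P k + osb_orbit_of n P (Suc k mod n) = 2 *\<^sub>R P k"
  using osb_gradient_consecutive[OF assms, of P]
  by (simp add: osb_orbit_of_def algebra_simps scaleR_2)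

lemma osb_orbit_of_next_diff:
  assumes "odd n" "k < n"
  shows "osb_orbit_of n P (Suc k mod n) - osb_orbit_of n P k = (-2) *\<^sub>R osb_gradient n P k"
proof -
  have "osb_orbit_of n P (Suc k mod n) = 2 *\<^sub>R P k - osb_orbit_of n P k"
    using osb_orbit_of_add_next[OF assms, of P] by (simp add: eq_diff_eq add.commute)
  then show ?thesis by (simp add: osb_orbit_of_def algebra_simps scaleR_2)
qed

lemma periodic_orbit_osb_orbit_of:
  assumes "odd n"
    and crit: "\<And>i. i < n \<Longrightarrow> \<exists>q\<in>N. f q = P i \<and> osb_gradient n P i \<in> symp_complement (tangent_image K f N q)"
  shows "periodic_orbit K f N n (osb_orbit_of n P)"
  unfolding periodic_orbit_def osb_corr_def
proof (intro allI impI)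
  fix i assume i: "i < n"
  then obtain q where q: "q \<in> N" "f q = P i"
    and V: "osb_gradient n P i \<in> symp_complement (tangent_image K f N q)"
    using crit by blast
  show "\<exists>q\<in>N. f q = (1/2) *\<^sub>R (osb_orbit_of n P i + osb_orbit_of n P (Suc i mod n)) \<and>
      osb_orbit_of n P (Suc i mod n) - osb_orbit_of n P i \<in> symp_complement (tangent_image K f N q)"
  proof (intro bexI conjI)
    show "f q = (1/2) *\<^sub>R (osb_orbit_of n P i + osb_orbit_of n P (Suc i mod n))"
      using q(2) by (simp add: osb_orbit_of_add_next[OF assms(1) i])
    show "osb_orbit_of n P (Suc i mod n) - osb_orbit_of n P i \<in> symp_complement (tangent_image K f N q)"
      unfolding osb_orbit_of_next_diff[OF assms(1) i] by (rule symp_complement_scaleR[OF V])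
  qed (rule q(1))
qed

lemma nondegenerate_orbit_osb_orbit_of:
  assumes "odd n" "cyclic_repetitions n P = {}"
  shows "nondegenerate_orbit n (osb_orbit_of n P)"
  unfolding nondegenerate_orbit_def
proof (intro allI impI notI)
  fix i assume i: "i < n"
    and eq: "osb_orbit_of n P ((i + n - 1) mod n) = osb_orbit_of n P (Suc i mod n)"
  define km where "km = (i + n - 1) mod n"
  have km: "km < n" "Suc km mod n = i"
    using i Suc_pred_mod[OF i] by (simp_all add: km_def)
  from eq have eq': "osb_orbit_of n P km = osb_orbit_of n P (Suc i mod n)"
    by (simp only: km_def)
  have "2 *\<^sub>R P km = osb_orbit_of n P km + osb_orbit_of n P i"
    using osb_orbit_of_add_next[OF assms(1) km(1), of P, symmetric] unfolding km(2) .
  also have "\<dots> = osb_orbit_of n P i + osb_orbit_of n P (Suc i mod n)"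
    using eq' by (simp add: add.commute)
  also have "\<dots> = 2 *\<^sub>R P i"
    by (rule osb_orbit_of_add_next[OF assms(1) i])
  finally have "km \<in> cyclic_repetitions n P"
    using km by (simp add: cyclic_repetitions_def)
  then show False using assms(2) by simp
qed

theorem mainTheorem1:
  fixes N :: "'n::euclidean_space set"
    and f :: "'n \<Rightarrow> (real^'d) \<times> (real^'d)"
    and n :: nat
  assumes "closed_manifold TYPE('k::euclidean_space) N"
    and "immersion TYPE('k) f N"
    and "odd n" and "n \<ge> 3"
  shows "\<exists>z. periodic_orbit TYPE('k) f N n z \<and> nondegenerate_orbit n z"
proof -
  have "compact N" "N \<noteq> {}" using assms(1) unfolding closed_manifold_def by auto
  have "compact (f ` N)"
    using compact_continuous_image[OF immersion_continuous_on[OF assms(2)] \<open>compact N\<close>] .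
  moreover have "infinite (f ` N)"
    using immersion_image_infinite[OF assms(2) \<open>N \<noteq> {}\<close>] .
  moreover have "2 < n" using assms(4) by simp
  ultimately obtain P where P: "osb_maximizer n (f ` N) P" "cyclic_repetitions n P = {}"
    using osb_maximizer_nonrepeating_exists[OF _ _ assms(3)] by blast
  have "\<exists>q\<in>N. f q = P i \<and> osb_gradient n P i \<in> symp_complement (tangent_image TYPE('k) f N q)"
    if "i < n" for i
  proof -
    have "P i \<in> f ` N" using P(1) that unfolding osb_maximizer_def by blast
    then obtain q where "q \<in> N" "f q = P i" by (metis imageE)
    then show ?thesis
      using osb_maximizer_gradient_symp_orthogonal[OF P(1) that] by blast
  qed
  then have "periodic_orbit TYPE('k) f N n (osb_orbit_of n P)"
    by (rule periodic_orbit_osb_orbit_of[OF assms(3)])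
  with nondegenerate_orbit_osb_orbit_of[OF assms(3) P(2)] show ?thesis by blast
qed

end
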